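(* Let $N\ge2$ and let $W:[0,\infty)\to(0,\infty)$ be such that $x\mapsto W(|x|)$ is in $C^2(\mathbb{R}^N)$, $W$ is non-decreasing and log-convex. Let $F\in C^2[0,+\infty)$ satisfy $F(0)=0<F(r)$ for $r>0$ and $$F''+\frac{W'}{W}F'+(N-1)\frac{F'}{r}=(N-1)\frac{F}{r^2}\quad\text{on }(0,+\infty).$$ Then for all $r>0$, $$\Big((F')^2+\frac{N-1}{r^2}F^2\Big)'\le0\qquad\text{and}\qquad\Big(\frac{N-1}{r}F^2+2FF'+\frac{W'}{W}F^2\Big)'\ge0.$$
   Context: This $F$ is the radial profile of the first nontrivial Steklov eigenfunctions $u_i(x)=\frac{x_i}{|x|}F(|x|)$, $i=1,\dots,N$, of $\nabla\cdot(W(|x|)\nabla u)=0$ in a ball centered at the origin with $\partial u/\partial\nu=\gamma u$ on its boundary. *)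

theory Defs
  imports "HOL-Analysis.Analysis"
begin

definition C2_everywhere :: "('a::euclidean_space \<Rightarrow> real) \<Rightarrow> bool" where
  "C2_everywhere f \<longleftrightarrow>
     (\<exists>(D :: 'a \<Rightarrow> 'a \<Rightarrow>\<^sub>L real) (D2 :: 'a \<Rightarrow> 'a \<Rightarrow>\<^sub>L ('a \<Rightarrow>\<^sub>L real)).
        (\<forall>x. (f has_derivative blinfun_apply (D x)) (at x)) \<and>
        (\<forall>x. (D has_derivative blinfun_apply (D2 x)) (at x)) \<and>
        continuous_on UNIV D2)"

end

theory Submission
  imports Defs
begin

text \<open>With \<open>n = N - 1\<close> and \<open>L = W'/W\<close>, eliminating \<open>F''\<close> by the ODE gives the identities
  \<open>((F')\<^sup>2 + n F\<^sup>2/r\<^sup>2)' = -2n/r (F' - F/r)\<^sup>2 - 2 L (F')\<^sup>2\<close> and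
  \<open>(n F\<^sup>2/r + 2 F F' + L F\<^sup>2)' = n F\<^sup>2/r\<^sup>2 + 2 (F')\<^sup>2 + L' F\<^sup>2\<close>.
  Monotonicity of \<open>W\<close> gives \<open>L \<ge> 0\<close>, and log-convexity gives \<open>L' = (ln W)'' \<ge> 0\<close>.
  The \<open>C\<^sup>2\<close> hypothesis on \<open>x \<mapsto> W |x|\<close> is used only to make \<open>W\<close> twice differentiable
  on \<open>(0, \<infinity>)\<close>, by restricting it to a ray.\<close>

lemma C2_everywhere_line_restriction:
  fixes f :: "'a::euclidean_space \<Rightarrow> real" and v :: 'a
  assumes "C2_everywhere f"
  obtains g' g'' where "\<And>t. ((\<lambda>t. f (t *\<^sub>R v)) has_real_derivative g' t) (at t)"
    and "\<And>t. (g' has_real_derivative g'' t) (at t)"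
proof -
  obtain D :: "'a \<Rightarrow> 'a \<Rightarrow>\<^sub>L real" and D2 :: "'a \<Rightarrow> 'a \<Rightarrow>\<^sub>L ('a \<Rightarrow>\<^sub>L real)" where
    D: "\<And>x. (f has_derivative blinfun_apply (D x)) (at x)" and
    D2: "\<And>x. (D has_derivative blinfun_apply (D2 x)) (at x)"
    using assms unfolding C2_everywhere_def by blast
  have line: "((\<lambda>t::real. t *\<^sub>R v) has_derivative (\<lambda>h. h *\<^sub>R v)) (at t)" for t
    by (intro derivative_eq_intros) auto
  show ?thesis
  proof
    fix t :: real
    have "(f \<circ> (\<lambda>t. t *\<^sub>R v) has_derivative D (t *\<^sub>R v) \<circ> (\<lambda>h. h *\<^sub>R v)) (at t)"
      by (rule diff_chain_at[OF line D])
    then show "((\<lambda>t. f (t *\<^sub>R v)) has_real_derivative D (t *\<^sub>R v) v) (at t)"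
      by (simp add: has_field_derivative_def o_def blinfun.scaleR_right mult_commute_abs)
  next
    fix t :: real
    have "(D \<circ> (\<lambda>t. t *\<^sub>R v) has_derivative D2 (t *\<^sub>R v) \<circ> (\<lambda>h. h *\<^sub>R v)) (at t)"
      by (rule diff_chain_at[OF line D2])
    then have "((\<lambda>L. blinfun_apply L v) \<circ> (D \<circ> (\<lambda>t. t *\<^sub>R v)) has_derivative
        (\<lambda>L. blinfun_apply L v) \<circ> (D2 (t *\<^sub>R v) \<circ> (\<lambda>h. h *\<^sub>R v))) (at t)"
      by (rule diff_chain_at[OF _ bounded_linear_imp_has_derivative])
        (rule bounded_linear_apply_blinfun)
    then show "((\<lambda>t. D (t *\<^sub>R v) v) has_real_derivative D2 (t *\<^sub>R v) v v) (at t)"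
      by (simp add: has_field_derivative_def o_def blinfun.scaleR_right
          blinfun.scaleR_left mult_commute_abs)
  qed
qed

lemma radial_profile_twice_differentiable:
  fixes W :: "real \<Rightarrow> real"
  assumes "C2_everywhere (\<lambda>x::'a::euclidean_space. W (norm x))"
  obtains W'' where "\<And>t. t > 0 \<Longrightarrow> (W has_real_derivative deriv W t) (at t)"
    and "\<And>t. t > 0 \<Longrightarrow> (deriv W has_real_derivative W'' t) (at t)"
proof -
  obtain e :: 'a where "e \<in> Basis" using nonempty_Basis by blast
  then have e: "norm e = 1" by simp
  obtain g' g'' where g': "\<And>t. ((\<lambda>t. W (norm (t *\<^sub>R e))) has_real_derivative g' t) (at t)"
    and g'': "\<And>t. (g' has_real_derivative g'' t) (at t)"
    using C2_everywhere_line_restriction[OF assms] by blast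
  have W': "(W has_real_derivative g' t) (at t)" if "t > 0" for t
    by (rule has_field_derivative_transform_within_open[OF g'[of t], where S="{0<..}"])
      (use that e in auto)
  have "deriv W t = g' t" if "t > 0" for t
    using W'[OF that] by (rule DERIV_imp_deriv)
  then have "(deriv W has_real_derivative g'' t) (at t)" if "t > 0" for t
    using has_field_derivative_transform_within_open[OF g''[of t], where S="{0<..}"] that
    by auto
  with W' show ?thesis
    using that DERIV_imp_deriv by metis
qed

lemma convex_on_deriv_mono:
  fixes f :: "real \<Rightarrow> real"
  assumes convex: "convex_on A f" and conn: "connected A"
    and x: "x \<in> interior A" and y: "y \<in> interior A" and "x \<le> y"
    and fx: "(f has_real_derivative f'x) (at x)" and fy: "(f has_real_derivative f'y) (at y)"
  shows "f'x \<le> f'y"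
proof (cases "x = y")
  case True
  then show ?thesis
    using fx fy DERIV_unique by blast
next
  case False
  have "f y - f x \<ge> f'x * (y - x)"
    using convex_on_imp_above_tangent[OF convex conn x _ has_field_derivative_at_within[OF fx]]
      y interior_subset by blast
  moreover have "f x - f y \<ge> f'y * (x - y)"
    using convex_on_imp_above_tangent[OF convex conn y _ has_field_derivative_at_within[OF fy]]
      x interior_subset by blast
  ultimately have "f'x * (y - x) \<le> f'y * (y - x)"
    by (simp add: algebra_simps)
  then show ?thesis
    using \<open>x \<le> y\<close> False by simp
qed

lemma convex_on_second_deriv_nonneg:
  fixes f f' :: "real \<Rightarrow> real"
  assumes convex: "convex_on A f" and conn: "connected A"
    and f': "\<And>y. y \<in> interior A \<Longrightarrow> (f has_real_derivative f' y) (at y)"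
    and f'': "(f' has_real_derivative f'') (at x)" and x: "x \<in> interior A"
  shows "f'' \<ge> 0"
proof -
  have "mono_on (interior A) f'"
    by (intro mono_onI convex_on_deriv_mono[OF convex conn _ _ _ f' f'])
  then show ?thesis
    using mono_on_imp_deriv_nonneg[OF _ f''] x by simp
qed

lemma log_convex_imp_log_deriv_increasing:
  fixes W :: "real \<Rightarrow> real"
  assumes convex: "convex_on A (\<lambda>t. ln (W t))" and conn: "connected A"
    and pos: "\<And>t. t \<in> interior A \<Longrightarrow> W t > 0"
    and W': "\<And>t. t \<in> interior A \<Longrightarrow> (W has_real_derivative deriv W t) (at t)"
    and W'': "(deriv W has_real_derivative W'') (at r)" and r: "r \<in> interior A"
  obtains L' where "((\<lambda>t. deriv W t / W t) has_real_derivative L') (at r)" and "L' \<ge> 0"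
proof
  have "W r \<noteq> 0"
    using pos[OF r] by simp
  then show L': "((\<lambda>t. deriv W t / W t) has_real_derivative
      (W'' * W r - deriv W r * deriv W r) / (W r * W r)) (at r)"
    by (auto intro!: derivative_eq_intros W'[OF r] W'')
  have "((\<lambda>t. ln (W t)) has_real_derivative deriv W t / W t) (at t)" if "t \<in> interior A" for t
    using pos[OF that] by (auto intro!: derivative_eq_intros W'[OF that])
  then show "(W'' * W r - deriv W r * deriv W r) / (W r * W r) \<ge> 0"
    using convex_on_second_deriv_nonneg[OF convex conn _ L' r] by blast
qed

lemma radial_energy_deriv_nonpos:
  fixes n r :: real and L F F' F'' :: "real \<Rightarrow> real"
  assumes r: "r > 0" and n: "n \<ge> 0" and L: "L r \<ge> 0"
    and F': "(F has_real_derivative F' r) (at r)" and F'': "(F' has_real_derivative F'' r) (at r)"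
    and ode: "F'' r + L r * F' r + n * F' r / r = n * F r / r\<^sup>2"
  shows "\<exists>D. ((\<lambda>s. (F' s)\<^sup>2 + n / s\<^sup>2 * (F s)\<^sup>2) has_real_derivative D) (at r) \<and> D \<le> 0"
proof (intro exI conjI)
  have F''_eq: "F'' r = n * F r / r\<^sup>2 - L r * F' r - n * F' r / r"
    using ode by (simp add: algebra_simps)
  have "((\<lambda>s. (F' s)\<^sup>2 + n / s\<^sup>2 * (F s)\<^sup>2) has_real_derivative
      2 * F' r * F'' r + n * (2 * F r * F' r / r\<^sup>2 - 2 * (F r)\<^sup>2 / r ^ 3)) (at r)"
    using r by (auto intro!: derivative_eq_intros F' F'' simp: field_simps power2_eq_square power3_eq_cube)
  moreover have "2 * F' r * F'' r + n * (2 * F r * F' r / r\<^sup>2 - 2 * (F r)\<^sup>2 / r ^ 3)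
      = - (2 * n / r * (F' r - F r / r)\<^sup>2 + 2 * L r * (F' r)\<^sup>2)"
    using r unfolding F''_eq by (simp add: field_simps power2_eq_square power3_eq_cube)
  ultimately show "((\<lambda>s. (F' s)\<^sup>2 + n / s\<^sup>2 * (F s)\<^sup>2) has_real_derivative
      - (2 * n / r * (F' r - F r / r)\<^sup>2 + 2 * L r * (F' r)\<^sup>2)) (at r)"
    by (rule DERIV_cong)
  show "- (2 * n / r * (F' r - F r / r)\<^sup>2 + 2 * L r * (F' r)\<^sup>2) \<le> 0"
    using r n L by (intro neg_le_0_iff_le[THEN iffD2] add_nonneg_nonneg mult_nonneg_nonneg) auto
qed

lemma radial_flux_deriv_nonneg:
  fixes n r L' :: real and L F F' F'' :: "real \<Rightarrow> real"
  assumes r: "r > 0" and n: "n \<ge> 0" and L'_nonneg: "L' \<ge> 0"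
    and F': "(F has_real_derivative F' r) (at r)" and F'': "(F' has_real_derivative F'' r) (at r)"
    and L': "(L has_real_derivative L') (at r)"
    and ode: "F'' r + L r * F' r + n * F' r / r = n * F r / r\<^sup>2"
  shows "\<exists>D. ((\<lambda>s. n / s * (F s)\<^sup>2 + 2 * F s * F' s + L s * (F s)\<^sup>2) has_real_derivative D) (at r)
    \<and> D \<ge> 0"
proof (intro exI conjI)
  have F''_eq: "F'' r = n * F r / r\<^sup>2 - L r * F' r - n * F' r / r"
    using ode by (simp add: algebra_simps)
  have "((\<lambda>s. n / s * (F s)\<^sup>2 + 2 * F s * F' s + L s * (F s)\<^sup>2) has_real_derivative
      - n / r\<^sup>2 * (F r)\<^sup>2 + n / r * 2 * F r * F' r + 2 * F' r * F' r + 2 * F r * F'' r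
        + L' * (F r)\<^sup>2 + L r * 2 * F r * F' r) (at r)"
    using r by (auto intro!: derivative_eq_intros F' F'' L' simp: field_simps power2_eq_square)
  moreover have "- n / r\<^sup>2 * (F r)\<^sup>2 + n / r * 2 * F r * F' r + 2 * F' r * F' r + 2 * F r * F'' r
        + L' * (F r)\<^sup>2 + L r * 2 * F r * F' r
      = n / r\<^sup>2 * (F r)\<^sup>2 + 2 * (F' r)\<^sup>2 + L' * (F r)\<^sup>2"
    using r unfolding F''_eq by (simp add: field_simps power2_eq_square)
  ultimately show "((\<lambda>s. n / s * (F s)\<^sup>2 + 2 * F s * F' s + L s * (F s)\<^sup>2) has_real_derivative
      n / r\<^sup>2 * (F r)\<^sup>2 + 2 * (F' r)\<^sup>2 + L' * (F r)\<^sup>2) (at r)"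
    by (rule DERIV_cong)
  show "n / r\<^sup>2 * (F r)\<^sup>2 + 2 * (F' r)\<^sup>2 + L' * (F r)\<^sup>2 \<ge> 0"
    using n L'_nonneg by (simp add: add_nonneg_nonneg)
qed

theorem lemma3p3:
  fixes N :: nat and W F F' F'' :: "real \<Rightarrow> real"
  assumes dim: "DIM('a::euclidean_space) = N"
    and N2: "N \<ge> 2"
    and Wpos: "\<And>r. r \<ge> 0 \<Longrightarrow> W r > 0"
    and WC2: "C2_everywhere (\<lambda>x::'a. W (norm x))"
    and Wmono: "mono_on {0..} W"
    and Wlogconv: "convex_on {0..} (\<lambda>r. ln (W r))"
    and F1: "\<And>r. r \<ge> 0 \<Longrightarrow> (F has_real_derivative F' r) (at r within {0..})"
    and F2: "\<And>r. r \<ge> 0 \<Longrightarrow> (F' has_real_derivative F'' r) (at r within {0..})"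
    and F2cont: "continuous_on {0..} F''"
    and F0: "F 0 = 0"
    and Fpos: "\<And>r. r > 0 \<Longrightarrow> F r > 0"
    and ode: "\<And>r. r > 0 \<Longrightarrow>
       F'' r + deriv W r / W r * F' r + (real N - 1) * F' r / r = (real N - 1) * F r / r\<^sup>2"
  shows "\<forall>r>0.
     (\<exists>D. ((\<lambda>s. (F' s)\<^sup>2 + (real N - 1) / s\<^sup>2 * (F s)\<^sup>2) has_real_derivative D) (at r) \<and> D \<le> 0) \<and>
     (\<exists>D. ((\<lambda>s. (real N - 1) / s * (F s)\<^sup>2 + 2 * F s * F' s + deriv W s / W s * (F s)\<^sup>2)
            has_real_derivative D) (at r) \<and> D \<ge> 0)"
proof (intro allI impI conjI)
  fix r :: real assume r: "r > 0"
  obtain W'' where W': "\<And>t. t > 0 \<Longrightarrow> (W has_real_derivative deriv W t) (at t)"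
    and W'': "\<And>t. t > 0 \<Longrightarrow> (deriv W has_real_derivative W'' t) (at t)"
    using radial_profile_twice_differentiable[OF WC2] by blast
  obtain L' where L': "((\<lambda>s. deriv W s / W s) has_real_derivative L') (at r)" and "L' \<ge> 0"
    by (rule log_convex_imp_log_deriv_increasing[OF Wlogconv is_interval_connected _ _ W''[OF r]])
      (use r Wpos W' in auto)
  have "deriv W r / W r \<ge> 0"
    using mono_on_imp_deriv_nonneg[OF Wmono W'[OF r]] Wpos[of r] r by simp
  have "at r within {0..} = at r"
    by (rule at_within_interior) (use r in simp)
  then have F': "(F has_real_derivative F' r) (at r)" and F'': "(F' has_real_derivative F'' r) (at r)"
    using F1[of r] F2[of r] r by simp_all
  have "real N - 1 \<ge> 0"
    using N2 by simp
  show "\<exists>D. ((\<lambda>s. (F' s)\<^sup>2 + (real N - 1) / s\<^sup>2 * (F s)\<^sup>2) has_real_derivative D) (at r) \<and> D \<le> 0"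
    using r \<open>real N - 1 \<ge> 0\<close> \<open>deriv W r / W r \<ge> 0\<close> F' F'' ode[OF r]
    by (rule radial_energy_deriv_nonpos[where L="\<lambda>s. deriv W s / W s"])
  show "\<exists>D. ((\<lambda>s. (real N - 1) / s * (F s)\<^sup>2 + 2 * F s * F' s + deriv W s / W s * (F s)\<^sup>2)
      has_real_derivative D) (at r) \<and> D \<ge> 0"
    using r \<open>real N - 1 \<ge> 0\<close> \<open>L' \<ge> 0\<close> F' F'' L' ode[OF r]
    by (rule radial_flux_deriv_nonneg)
qed

end
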